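(* The following structures have oligomorphic approximation: (i) every countable homogeneous oligomorphic structure $\mathbb{A}$ for which there is a family $\mathscr{B}$ of finite substructures of $\mathbb{A}$ such that every finite substructure of $\mathbb{A}$ is a substructure of some member of $\mathscr{B}$ and every member of $\mathscr{B}$ is homogeneous; (ii) the equality atoms; (iii) the vector atoms over any finite field $\mathsf{k}$; (iv) the Rado atoms.
   Context: A structure is a set with interpretations of relation symbols of a vocabulary; embeddings preserve and reflect relations and are injective; a substructure is the restriction to a subset. A structure $\mathbb{A}$ is homogeneous if every isomorphism between finite substructures of $\mathbb{A}$ extends to an automorphism of $\mathbb{A}$; oligomorphic if $\operatorname{Aut}(\mathbb{A})$ has finitely many orbits on $\mathbb{A}^d$ for every $d\ge1$. A homogeneous structure $\mathbb{A}$ has oligomorphic approximation if for every $d\ge1$ there is a family $\mathscr{B}$ of finite substructures of $\mathbb{A}$ such that (1) every finite substructure of $\mathbb{A}$ is a substructure of some $\mathbb{B}\in\mathscr{B}$, and (2) there is a finite bound, uniform over $\mathbb{B}\in\mathscr{B}$, on the number of orbits of $\operatorname{Aut}(\mathbb{B})$ on $\mathbb{B}^d$. Equality atoms: $\mathbb{N}$ with no relations besides equality. Vector atoms over a finite field $\mathsf{k}$: the countably-infinite-dimensional $\mathsf{k}$-vector space, with, for every $d$ and $\lambda_1,\dots,\lambda_d\in\mathsf{k}$, the $d$-ary relation $\lambda_1a_1+\dots+\lambda_da_d=0$ (so automorphisms are the linear bijections). Rado atoms: the Rado graph (the Fraïssé limit of all finite undirected graphs, i.e. the unique countable homogeneous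 graph into which every finite graph embeds), over a single symmetric irreflexive binary edge relation. *)

theory Defs
  imports Main "HOL-Library.Countable_Set"
begin

record ('a, 'r) struct =
  univ :: "'a set"
  syms :: "'r set"
  ar   :: "'r \<Rightarrow> nat"
  rel  :: "'r \<Rightarrow> 'a list \<Rightarrow> bool"

definition tuples :: "('a, 'r) struct \<Rightarrow> nat \<Rightarrow> 'a list set" where
  "tuples A d = {xs. length xs = d \<and> set xs \<subseteq> univ A}"

definition restr :: "('a, 'r) struct \<Rightarrow> 'a set \<Rightarrow> ('a, 'r) struct" where
  "restr A S = A\<lparr>univ := S\<rparr>"

definition embedding :: "('a, 'r) struct \<Rightarrow> ('b, 'r) struct \<Rightarrow> ('a \<Rightarrow> 'b) \<Rightarrow> bool" where
  "embedding A B f \<longleftrightarrow>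
     inj_on f (univ A) \<and> f ` univ A \<subseteq> univ B \<and>
     (\<forall>r \<in> syms A. \<forall>xs. length xs = ar A r \<and> set xs \<subseteq> univ A \<longrightarrow>
        (rel A r xs \<longleftrightarrow> rel B r (map f xs)))"

definition isomorphism :: "('a, 'r) struct \<Rightarrow> ('b, 'r) struct \<Rightarrow> ('a \<Rightarrow> 'b) \<Rightarrow> bool" where
  "isomorphism A B f \<longleftrightarrow> embedding A B f \<and> f ` univ A = univ B"

definition automorphism :: "('a, 'r) struct \<Rightarrow> ('a \<Rightarrow> 'a) \<Rightarrow> bool" where
  "automorphism A g \<longleftrightarrow> isomorphism A A g"

definition homogeneous :: "('a, 'r) struct \<Rightarrow> bool" where
  "homogeneous A \<longleftrightarrow>
     (\<forall>S T f. finite S \<and> finite T \<and> S \<subseteq> univ A \<and> T \<subseteq> univ A \<and>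
        isomorphism (restr A S) (restr A T) f \<longrightarrow>
        (\<exists>g. automorphism A g \<and> (\<forall>x\<in>S. g x = f x)))"

definition orbit :: "('a, 'r) struct \<Rightarrow> 'a list \<Rightarrow> 'a list set" where
  "orbit A xs = {map g xs | g. automorphism A g}"

definition orbits :: "('a, 'r) struct \<Rightarrow> nat \<Rightarrow> 'a list set set" where
  "orbits A d = orbit A ` tuples A d"

definition oligomorphic :: "('a, 'r) struct \<Rightarrow> bool" where
  "oligomorphic A \<longleftrightarrow> (\<forall>d\<ge>1. finite (orbits A d))"

text \<open>Every finite substructure of A (induced on finite S) is a substructure of some
  member of the family; members are finite substructures of A (given by their universes).\<close>
definition covering_family :: "('a, 'r) struct \<Rightarrow> 'a set set \<Rightarrow> bool" where
  "covering_family A \<B> \<longleftrightarrow>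
     (\<forall>B\<in>\<B>. finite B \<and> B \<subseteq> univ A) \<and>
     (\<forall>S. finite S \<and> S \<subseteq> univ A \<longrightarrow> (\<exists>B\<in>\<B>. S \<subseteq> B))"

definition oligomorphic_approximation :: "('a, 'r) struct \<Rightarrow> bool" where
  "oligomorphic_approximation A \<longleftrightarrow>
     (\<forall>d\<ge>1. \<exists>\<B>. covering_family A \<B> \<and>
        (\<exists>N::nat. \<forall>B\<in>\<B>. finite (orbits (restr A B) d) \<and> card (orbits (restr A B) d) \<le> N))"

definition equality_atoms :: "(nat, unit) struct" where
  "equality_atoms = \<lparr>univ = UNIV, syms = {}, ar = (\<lambda>_. 0), rel = (\<lambda>_ _. False)\<rparr>"

text \<open>Vector atoms over a finite field k: the countably-infinite-dimensional k-vector
  space, modelled as finitely supported functions nat \<Rightarrow> k; for every d \<ge> 1 and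
  coefficients [l1,...,ld] the d-ary relation l1 a1 + ... + ld ad = 0.\<close>
definition vector_atoms :: "(nat \<Rightarrow> 'k::{field,finite}, 'k list) struct" where
  "vector_atoms =
     \<lparr>univ = {v. finite {i. v i \<noteq> 0}},
      syms = {ls. ls \<noteq> []},
      ar = length,
      rel = (\<lambda>ls xs. (\<lambda>j. \<Sum>i<length ls. ls ! i * (xs ! i) j) = (\<lambda>_. 0))\<rparr>"

definition graph_struct :: "'a set \<Rightarrow> ('a \<Rightarrow> 'a \<Rightarrow> bool) \<Rightarrow> ('a, unit) struct" where
  "graph_struct V E = \<lparr>univ = V, syms = {()}, ar = (\<lambda>_. 2), rel = (\<lambda>_ xs. E (xs ! 0) (xs ! 1))\<rparr>"

definition is_graph :: "'a set \<Rightarrow> ('a \<Rightarrow> 'a \<Rightarrow> bool) \<Rightarrow> bool" where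
  "is_graph V E \<longleftrightarrow> (\<forall>x\<in>V. \<forall>y\<in>V. E x y \<longleftrightarrow> E y x) \<and> (\<forall>x\<in>V. \<not> E x x)"

text \<open>Rado graph: a countable homogeneous graph into which every finite graph embeds
  (finite graphs up to isomorphism are represented on finite subsets of nat).\<close>
definition is_rado_graph :: "'a set \<Rightarrow> ('a \<Rightarrow> 'a \<Rightarrow> bool) \<Rightarrow> bool" where
  "is_rado_graph V E \<longleftrightarrow>
     countable V \<and> is_graph V E \<and> homogeneous (graph_struct V E) \<and>
     (\<forall>(W::nat set) F. finite W \<and> is_graph W F \<longrightarrow>
        (\<exists>f. embedding (graph_struct W F) (graph_struct V E) f))"

end

(* In each case the orbits of Aut(B) on d-tuples, for B in a suitable covering family, are
   separated by an invariant of d-tuples whose values range over a finite set independent of B: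
   tuples with the same invariant lie in the same orbit.  This is proved one point at a time:
   if x @ [a] and x @ [b] have the same invariant, some automorphism of B fixes x and sends a
   to b.
   (i) The invariant is the Aut(A)-orbit; homogeneity of B turns an automorphism of A moving
   one tuple of B to another into an automorphism of B.
   (ii) B ranges over the finite sets, the invariant is the pattern of equalities, and the
   extending maps are transpositions.
   (iii) B ranges over the coordinate subspaces k^n, the invariant is the set of linear
   relations, and the extending maps are z |-> z + f(z) (b - a) for a functional f that
   vanishes on x.
   (iv) B ranges over copies, inside the Rado graph, of the symplectic graphs on F_2^(2m),
   where u ~ v iff the standard symplectic form takes the value 1 on u and v.  Every finite
   graph embeds into one of them, and universality plus homogeneity of the Rado graph extend
   such an embedding to a copy of the whole symplectic graph containing a given finite set.
   The invariant is the set of linear relations together with the Gram matrix, and Witt's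
   extension lemma holds with at most two symplectic transvections. *)

theory Submission
  imports Defs "HOL-Library.Function_Algebras" HOL.Vector_Spaces "HOL-Library.Z2"
begin

section \<open>Embeddings, automorphisms and orbits\<close>

lemma restr_simps [simp]:
  "univ (restr A S) = S" "syms (restr A S) = syms A" "ar (restr A S) = ar A" "rel (restr A S) = rel A"
  by (simp_all add: restr_def)

lemma restr_restr [simp]: "restr (restr A B) S = restr A S"
  by (simp add: restr_def)

lemma embedding_comp:
  assumes f: "embedding A B f" and g: "embedding B C g"
    and sig: "syms B = syms A" "ar B = ar A"
  shows "embedding A C (g \<circ> f)"
proof -
  have fB: "f ` univ A \<subseteq> univ B" and inj_f: "inj_on f (univ A)" and inj_g: "inj_on g (univ B)"
    using f g by (auto simp: embedding_def)
  have "rel A r xs \<longleftrightarrow> rel C r (map (g \<circ> f) xs)"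
    if "r \<in> syms A" "length xs = ar A r" "set xs \<subseteq> univ A" for r xs
  proof -
    have "set (map f xs) \<subseteq> univ B" using that fB by auto
    then show ?thesis using f g that sig by (simp add: embedding_def)
  qed
  moreover have "inj_on (g \<circ> f) (univ A)"
    using inj_f inj_g fB by (blast intro: comp_inj_on inj_on_subset)
  moreover have "(g \<circ> f) ` univ A \<subseteq> univ C"
    using fB g by (auto simp: embedding_def)
  ultimately show ?thesis by (simp add: embedding_def)
qed

lemma isomorphism_comp:
  assumes "isomorphism A B f" "isomorphism B C g" "syms B = syms A" "ar B = ar A"
  shows "isomorphism A C (g \<circ> f)"
proof -
  have "embedding A C (g \<circ> f)"
    using assms embedding_comp[of A B f C g] by (simp add: isomorphism_def)
  moreover have "(g \<circ> f) ` univ A = univ C"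
    using assms by (metis isomorphism_def image_comp)
  ultimately show ?thesis by (simp add: isomorphism_def)
qed

lemma isomorphism_inv_into:
  assumes f: "isomorphism A B f" and sig: "syms B = syms A" "ar B = ar A"
  shows "isomorphism B A (inv_into (univ A) f)"
proof -
  let ?f' = "inv_into (univ A) f"
  have inj: "inj_on f (univ A)" and img: "f ` univ A = univ B"
    using f by (auto simp: isomorphism_def embedding_def)
  have "rel B r xs \<longleftrightarrow> rel A r (map ?f' xs)"
    if "r \<in> syms B" "length xs = ar B r" "set xs \<subseteq> univ B" for r xs
  proof -
    have "set (map ?f' xs) \<subseteq> univ A"
      using that(3) unfolding img[symmetric] by (auto intro: inv_into_into)
    moreover have "map f (map ?f' xs) = xs"
      unfolding map_map by (rule map_idI) (metis that(3) img f_inv_into_f subsetD comp_apply)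
    ultimately show ?thesis using f that sig by (auto simp: isomorphism_def embedding_def)
  qed
  moreover have "inj_on ?f' (univ B)" using img by (simp add: inj_on_inv_into)
  moreover have "?f' ` univ B = univ A" using inj img by (metis inv_into_image_cancel order_refl)
  ultimately show ?thesis by (auto simp: isomorphism_def embedding_def)
qed

lemma automorphism_id: "automorphism A id"
  by (auto simp: automorphism_def isomorphism_def embedding_def)

lemma automorphism_comp: "automorphism A g \<Longrightarrow> automorphism A h \<Longrightarrow> automorphism A (h \<circ> g)"
  unfolding automorphism_def by (rule isomorphism_comp) auto

lemma automorphism_inv_into: "automorphism A g \<Longrightarrow> automorphism A (inv_into (univ A) g)"
  unfolding automorphism_def by (rule isomorphism_inv_into) auto

lemma embedding_restr_isomorphism:
  assumes "embedding A B f" "S \<subseteq> univ A"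
  shows "isomorphism (restr A S) (restr B (f ` S)) f"
proof -
  have "inj_on f S" using assms by (auto simp: embedding_def intro: inj_on_subset)
  then show ?thesis using assms by (fastforce simp: isomorphism_def embedding_def)
qed

lemma homogeneous_extend_embedding:
  assumes hom: "homogeneous A" and q: "embedding B A q"
    and p: "embedding (restr A S) B p" and S: "finite S" "S \<subseteq> univ A"
    and sig: "syms B = syms A" "ar B = ar A"
  shows "\<exists>\<psi>. embedding B A \<psi> \<and> (\<forall>a\<in>S. \<psi> (p a) = a)"
proof -
  define r where "r = q \<circ> p"
  have r: "embedding (restr A S) A r"
    unfolding r_def using embedding_comp[OF p q] sig by simp
  then have r_iso: "isomorphism (restr A S) (restr A (r ` S)) r"
    using embedding_restr_isomorphism[OF r, of S] by simp
  have "r ` S \<subseteq> univ A" using r by (auto simp: embedding_def)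
  then obtain h where h: "automorphism A h" "\<forall>t\<in>r ` S. h t = inv_into S r t"
    using hom isomorphism_inv_into[OF r_iso] S
    unfolding homogeneous_def by (metis finite_imageI restr_simps)
  have "embedding A A h" using h(1) by (simp add: automorphism_def isomorphism_def)
  then have "embedding B A (h \<circ> q)" using embedding_comp[OF q] sig by simp
  moreover have "h (q (p a)) = a" if "a \<in> S" for a
  proof -
    have "inj_on r S" using r by (simp add: embedding_def)
    then show ?thesis using h(2) that inv_into_f_f by (fastforce simp: r_def)
  qed
  ultimately show ?thesis by auto
qed

lemma orbit_map_automorphism:
  assumes g: "automorphism A g" and x: "set x \<subseteq> univ A"
  shows "orbit A (map g x) = orbit A x"
proof
  have "map k (map g x) = map (k \<circ> g) x" for k by simp
  then show "orbit A (map g x) \<subseteq> orbit A x"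
    using automorphism_comp[OF g] unfolding orbit_def by blast
  have inj: "inj_on g (univ A)" using g by (simp add: automorphism_def isomorphism_def embedding_def)
  show "orbit A x \<subseteq> orbit A (map g x)"
  proof
    fix z assume "z \<in> orbit A x"
    then obtain k where k: "automorphism A k" "z = map k x" by (auto simp: orbit_def)
    then have "z = map (k \<circ> inv_into (univ A) g) (map g x)"
      using x inj by (auto simp: subset_iff)
    moreover have "automorphism A (k \<circ> inv_into (univ A) g)"
      using automorphism_comp[OF automorphism_inv_into[OF g] k(1)] .
    ultimately show "z \<in> orbit A (map g x)" unfolding orbit_def by blast
  qed
qed

lemma orbit_self: "xs \<in> orbit A xs"
proof -
  have "xs = map id xs" by simp
  then show ?thesis unfolding orbit_def using automorphism_id by blast
qed

lemma card_image_le_if_factors: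
  assumes "finite (g ` X)" and "\<And>x y. x \<in> X \<Longrightarrow> y \<in> X \<Longrightarrow> g x = g y \<Longrightarrow> f x = f y"
  shows "finite (f ` X) \<and> card (f ` X) \<le> card (g ` X)"
proof -
  have "f x = f (inv_into X g (g x))" if "x \<in> X" for x
    using assms(2)[OF that, of "inv_into X g (g x)"] that by (simp add: inv_into_into f_inv_into_f)
  then have "f ` X = (\<lambda>t. f (inv_into X g t)) ` g ` X"
    unfolding image_image by (rule image_cong[OF refl])
  then show ?thesis using assms(1) by (simp add: card_image_le)
qed

lemma card_orbits_le:
  assumes \<tau>: "\<tau> ` tuples A d \<subseteq> T" "finite T"
    and transitive: "\<And>x y. x \<in> tuples A d \<Longrightarrow> y \<in> tuples A d \<Longrightarrow> \<tau> x = \<tau> y \<Longrightarrow>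
                        \<exists>g. automorphism A g \<and> map g x = y"
  shows "finite (orbits A d) \<and> card (orbits A d) \<le> card T"
proof -
  have same_orbit: "orbit A x = orbit A y" if xy: "x \<in> tuples A d" "y \<in> tuples A d" "\<tau> x = \<tau> y" for x y
  proof -
    obtain g where "automorphism A g" "map g x = y" using transitive[OF xy] by blast
    moreover have "set x \<subseteq> univ A" using xy(1) by (simp add: tuples_def)
    ultimately show ?thesis using orbit_map_automorphism by metis
  qed
  have fin: "finite (\<tau> ` tuples A d)" using \<tau> finite_subset by blast
  have "finite (orbits A d) \<and> card (orbits A d) \<le> card (\<tau> ` tuples A d)"
    unfolding orbits_def by (rule card_image_le_if_factors[OF fin same_orbit])
  moreover have "card (\<tau> ` tuples A d) \<le> card T" using \<tau> by (rule card_mono[rotated])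
  ultimately show ?thesis by linarith
qed

lemma card_orbits_isomorphism_le:
  assumes f: "isomorphism A B f" and sig: "syms B = syms A" "ar B = ar A"
    and fin: "finite (orbits A d)"
  shows "finite (orbits B d) \<and> card (orbits B d) \<le> card (orbits A d)"
proof (rule card_orbits_le[where \<tau> = "\<lambda>y. orbit A (map (inv_into (univ A) f) y)", OF _ fin])
  let ?f' = "inv_into (univ A) f"
  have f': "isomorphism B A ?f'" using isomorphism_inv_into[OF f sig] .
  then have "set (map ?f' y) \<subseteq> univ A" if "set y \<subseteq> univ B" for y
    using that by (auto simp: isomorphism_def)
  then show "(\<lambda>y. orbit A (map ?f' y)) ` tuples B d \<subseteq> orbits A d"
    by (auto simp: orbits_def tuples_def)
  fix x y assume "x \<in> tuples B d" "y \<in> tuples B d"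
    and same_orbit: "orbit A (map ?f' x) = orbit A (map ?f' y)"
  have "map ?f' y \<in> orbit A (map ?f' x)" using orbit_self[of "map ?f' y" A] same_orbit by simp
  then obtain \<sigma> where \<sigma>: "automorphism A \<sigma>" "map ?f' y = map \<sigma> (map ?f' x)"
    unfolding orbit_def by blast
  have "isomorphism A A \<sigma>" using \<sigma>(1) by (simp add: automorphism_def)
  from isomorphism_comp[OF f' this sig[symmetric]]
  have "isomorphism B A (\<sigma> \<circ> ?f')" .
  from isomorphism_comp[OF this f sig[symmetric]]
  have "automorphism B (f \<circ> (\<sigma> \<circ> ?f'))" by (simp add: automorphism_def)
  moreover have "map f (map ?f' y) = y"
    using \<open>y \<in> tuples B d\<close> f by (auto simp: tuples_def isomorphism_def f_inv_into_f intro!: map_idI)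
  then have "map (f \<circ> (\<sigma> \<circ> ?f')) x = y" using \<sigma>(2) by simp
  ultimately show "\<exists>g. automorphism B g \<and> map g x = y" by blast
qed

context
  fixes A :: "('a, 'r) struct" and G :: "('a \<Rightarrow> 'a) set" and \<tau> :: "'a list \<Rightarrow> 't"
  assumes G_automorphism: "\<And>g. g \<in> G \<Longrightarrow> automorphism A g"
    and G_id: "id \<in> G" and G_comp: "\<And>g h. g \<in> G \<Longrightarrow> h \<in> G \<Longrightarrow> h \<circ> g \<in> G"
    and invariant: "\<And>g x. g \<in> G \<Longrightarrow> set x \<subseteq> univ A \<Longrightarrow> \<tau> (map g x) = \<tau> x"
    and prefix: "\<And>x y a b. length x = length y \<Longrightarrow> \<tau> (x @ [a]) = \<tau> (y @ [b]) \<Longrightarrow> \<tau> x = \<tau> y"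
    and extend: "\<And>x a b. set x \<subseteq> univ A \<Longrightarrow> a \<in> univ A \<Longrightarrow> b \<in> univ A \<Longrightarrow>
                   \<tau> (x @ [a]) = \<tau> (x @ [b]) \<Longrightarrow> \<exists>h\<in>G. (\<forall>v\<in>set x. h v = v) \<and> h a = b"
begin

lemma exists_map_of_invariant_eq:
  "length x = length y \<Longrightarrow> set x \<subseteq> univ A \<Longrightarrow> set y \<subseteq> univ A \<Longrightarrow> \<tau> x = \<tau> y \<Longrightarrow>
     \<exists>g\<in>G. map g x = y"
proof (induction x arbitrary: y rule: rev_induct)
  case Nil
  then show ?case using G_id by auto
next
  case (snoc a x)
  then obtain y' b where y: "y = y' @ [b]" and len: "length x = length y'"
    by (cases y rule: rev_cases) auto
  obtain g where g: "g \<in> G" "map g x = y'"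
    using snoc.IH[of y'] snoc.prems prefix[OF len] y len by auto
  have "\<tau> (y' @ [g a]) = \<tau> (y' @ [b])"
    using invariant[OF g(1), of "x @ [a]"] snoc.prems g(2) y by simp
  moreover have "g a \<in> univ A"
    using G_automorphism[OF g(1)] snoc.prems(2) by (auto simp: automorphism_def isomorphism_def)
  ultimately obtain h where h: "h \<in> G" "\<forall>v\<in>set y'. h v = v" "h (g a) = b"
    using extend[of y' "g a" b] snoc.prems y by auto
  have "map h y' = y'" using h(2) by (simp add: map_idI)
  then have "map (h \<circ> g) (x @ [a]) = y"
    using g(2) h(3) y by (metis list.map(1,2) map_append map_map)
  then show ?case using G_comp[OF g(1) h(1)] by blast
qed

lemma card_orbits_le_by_extension:
  assumes "\<tau> ` tuples A d \<subseteq> T" "finite T"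
  shows "finite (orbits A d) \<and> card (orbits A d) \<le> card T"
proof (rule card_orbits_le[OF assms])
  fix x y assume "x \<in> tuples A d" "y \<in> tuples A d" "\<tau> x = \<tau> y"
  then obtain g where "g \<in> G" "map g x = y"
    using exists_map_of_invariant_eq[of x y] by (auto simp: tuples_def)
  then show "\<exists>g. automorphism A g \<and> map g x = y" using G_automorphism by blast
qed

end

lemma card_orbits_homogeneous_restr_le:
  assumes hom: "homogeneous (restr A B)" and B: "B \<subseteq> univ A" and fin: "finite (orbits A d)"
  shows "finite (orbits (restr A B) d) \<and> card (orbits (restr A B) d) \<le> card (orbits A d)"
proof (rule card_orbits_le[where \<tau> = "orbit A", OF _ fin])
  show "orbit A ` tuples (restr A B) d \<subseteq> orbits A d"
    using B by (auto simp: orbits_def tuples_def)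
  fix x y assume x: "x \<in> tuples (restr A B) d" and y: "y \<in> tuples (restr A B) d"
    and same_orbit: "orbit A x = orbit A y"
  have "y \<in> orbit A x" using orbit_self[of y A] by (simp add: same_orbit)
  then obtain g where g: "automorphism A g" "y = map g x" unfolding orbit_def by blast
  have xB: "set x \<subseteq> B" and yB: "set y \<subseteq> B" using x y by (auto simp: tuples_def)
  have "isomorphism (restr A (set x)) (restr A (set y)) g"
    using embedding_restr_isomorphism[of A A g "set x"] g xB B
    by (simp add: automorphism_def isomorphism_def)
  then obtain h where "automorphism (restr A B) h" "\<forall>v\<in>set x. h v = g v"
    using hom[unfolded homogeneous_def, rule_format, of "set x" "set y" g] xB yB by auto
  then show "\<exists>h. automorphism (restr A B) h \<and> map h x = y" using g(2) by auto
qed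

lemma oligomorphic_approximation_if_homogeneous_cover:
  assumes olig: "oligomorphic A" and cov: "covering_family A \<B>"
    and hom: "\<forall>B\<in>\<B>. homogeneous (restr A B)"
  shows "oligomorphic_approximation A"
  unfolding oligomorphic_approximation_def
proof (intro allI impI)
  fix d :: nat assume "1 \<le> d"
  then have fin: "finite (orbits A d)" using olig by (simp add: oligomorphic_def)
  have "finite (orbits (restr A B) d) \<and> card (orbits (restr A B) d) \<le> card (orbits A d)"
    if "B \<in> \<B>" for B
  proof (rule card_orbits_homogeneous_restr_le[OF _ _ fin])
    show "homogeneous (restr A B)" using hom that by blast
    show "B \<subseteq> univ A" using cov that by (simp add: covering_family_def)
  qed
  then show "\<exists>\<B>. covering_family A \<B> \<and>
      (\<exists>N. \<forall>B\<in>\<B>. finite (orbits (restr A B) d) \<and> card (orbits (restr A B) d) \<le> N)"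
    using cov by blast
qed

section \<open>Equality atoms\<close>

lemma automorphism_restr_equality_atoms:
  "automorphism (restr equality_atoms B) g \<longleftrightarrow> bij_betw g B B"
  by (auto simp: automorphism_def isomorphism_def embedding_def bij_betw_def equality_atoms_def)

definition eq_pattern :: "'a list \<Rightarrow> (nat \<times> nat) set" where
  "eq_pattern x = {(i, j). i < length x \<and> j < length x \<and> x ! i = x ! j}"

lemma eq_pattern_map:
  assumes "inj_on g W" "set x \<subseteq> W"
  shows "eq_pattern (map g x) = eq_pattern x"
proof -
  have "g (x ! i) = g (x ! j) \<longleftrightarrow> x ! i = x ! j" if "i < length x" "j < length x" for i j
  proof -
    have "x ! i \<in> W" "x ! j \<in> W" using assms(2) that nth_mem by blast+
    then show ?thesis using assms(1) by (simp add: inj_on_eq_iff)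
  qed
  then show ?thesis by (auto simp: eq_pattern_def)
qed

lemma eq_pattern_butlast:
  fixes x y :: "'a list"
  assumes "length x = length y" "eq_pattern (x @ [a]) = eq_pattern (y @ [b])"
  shows "eq_pattern x = eq_pattern y"
proof -
  have restrict: "eq_pattern z = eq_pattern (z @ [c]) \<inter> {..<length z} \<times> {..<length z}"
    for z :: "'a list" and c
    by (auto simp: eq_pattern_def nth_append)
  show ?thesis using restrict[of x a] restrict[of y b] assms by simp
qed

lemma eq_pattern_snoc_eq:
  assumes "eq_pattern (x @ [a]) = eq_pattern (x @ [b])" "a \<in> set x"
  shows "b = a"
proof -
  obtain i where i: "i < length x" "x ! i = a" using assms(2) by (auto simp: in_set_conv_nth)
  then have "(i, length x) \<in> eq_pattern (x @ [a])" by (simp add: eq_pattern_def nth_append)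
  then have "(i, length x) \<in> eq_pattern (x @ [b])" using assms(1) by simp
  then show ?thesis using i by (simp add: eq_pattern_def nth_append)
qed

lemma card_orbits_restr_equality_atoms_le:
  "finite (orbits (restr equality_atoms B) d) \<and>
   card (orbits (restr equality_atoms B) d) \<le> card (Pow ({..<d} \<times> {..<d}))"
proof (rule card_orbits_le_by_extension[where G = "{g. bij_betw g B B}" and \<tau> = eq_pattern])
  show "automorphism (restr equality_atoms B) g" if "g \<in> {g. bij_betw g B B}" for g
    using that by (simp add: automorphism_restr_equality_atoms)
  show "id \<in> {g. bij_betw g B B}" by simp
  show "h \<circ> g \<in> {g. bij_betw g B B}" if "g \<in> {g. bij_betw g B B}" "h \<in> {g. bij_betw g B B}" for g h
    using that by (auto intro: bij_betw_trans)
  show "eq_pattern (map g x) = eq_pattern x"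
    if "g \<in> {g. bij_betw g B B}" "set x \<subseteq> univ (restr equality_atoms B)" for g x
    using eq_pattern_map[of g B x] that by (simp add: bij_betw_imp_inj_on)
  show "eq_pattern x = eq_pattern y"
    if "length x = length y" "eq_pattern (x @ [a]) = eq_pattern (y @ [b])" for x y :: "nat list" and a b
    using that by (rule eq_pattern_butlast)
  show "\<exists>h\<in>{g. bij_betw g B B}. (\<forall>v\<in>set x. h v = v) \<and> h a = b"
    if x: "set x \<subseteq> univ (restr equality_atoms B)" "a \<in> univ (restr equality_atoms B)"
      "b \<in> univ (restr equality_atoms B)" "eq_pattern (x @ [a]) = eq_pattern (x @ [b])" for x a b
  proof (cases "a \<in> set x \<or> b \<in> set x")
    case True
    then have "b = a" using x(4) eq_pattern_snoc_eq by metis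
    then show ?thesis by (intro bexI[of _ id]) auto
  next
    case False
    define h where "h z = (if z = a then b else if z = b then a else z)" for z
    have "bij_betw h B B"
      using x(2,3) by (intro bij_betw_byWitness[where f' = h]) (auto simp: h_def)
    moreover have "\<forall>v\<in>set x. h v = v" using False by (auto simp: h_def)
    ultimately show ?thesis by (intro bexI[of _ h]) (auto simp: h_def)
  qed
  show "eq_pattern ` tuples (restr equality_atoms B) d \<subseteq> Pow ({..<d} \<times> {..<d})"
    by (auto simp: tuples_def eq_pattern_def)
qed simp

lemma oligomorphic_approximation_equality_atoms: "oligomorphic_approximation equality_atoms"
  unfolding oligomorphic_approximation_def
proof (intro allI impI)
  fix d :: nat
  have "covering_family equality_atoms {B. finite B}"
    by (auto simp: covering_family_def equality_atoms_def)
  then show "\<exists>\<B>. covering_family equality_atoms \<B> \<and>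
      (\<exists>N. \<forall>B\<in>\<B>. finite (orbits (restr equality_atoms B) d) \<and>
                   card (orbits (restr equality_atoms B) d) \<le> N)"
    using card_orbits_restr_equality_atoms_le by blast
qed

section \<open>Vector atoms\<close>

definition fun_scale :: "'k::field \<Rightarrow> (nat \<Rightarrow> 'k) \<Rightarrow> nat \<Rightarrow> 'k" where
  "fun_scale c v = (\<lambda>i. c * v i)"

lemma fun_scale_apply: "fun_scale c v i = c * v i"
  by (simp add: fun_scale_def)

lemma vector_space_fun_scale: "vector_space (fun_scale :: 'k::field \<Rightarrow> _)"
  by unfold_locales (auto simp: fun_scale_def fun_eq_iff algebra_simps)

lemma vector_space_times: "vector_space ((*) :: 'k::field \<Rightarrow> 'k \<Rightarrow> 'k)"
  by unfold_locales (auto simp: algebra_simps)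

interpretation V: vector_space "fun_scale :: 'k::field \<Rightarrow> _"
  by (rule vector_space_fun_scale)

interpretation VV: vector_space_pair "fun_scale :: 'k::field \<Rightarrow> _" "fun_scale :: 'k::field \<Rightarrow> _" ..

interpretation VK: vector_space_pair "fun_scale :: 'k::field \<Rightarrow> _" "(*) :: 'k \<Rightarrow> 'k \<Rightarrow> 'k"
  by (intro vector_space_pair.intro vector_space_fun_scale vector_space_times)

abbreviation fun_linear :: "((nat \<Rightarrow> 'k::field) \<Rightarrow> (nat \<Rightarrow> 'k)) \<Rightarrow> bool" where
  "fun_linear \<equiv> Vector_Spaces.linear fun_scale fun_scale"

lemma sum_fun_apply: "sum f A x = (\<Sum>a\<in>A. f a x)"
  by (induction A rule: infinite_finite_induct) auto

definition lincomb :: "'k::field list \<Rightarrow> (nat \<Rightarrow> 'k) list \<Rightarrow> nat \<Rightarrow> 'k" where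
  "lincomb cs xs = (\<Sum>i<length cs. fun_scale (cs ! i) (xs ! i))"

definition lin_rels :: "(nat \<Rightarrow> 'k::field) list \<Rightarrow> 'k list set" where
  "lin_rels xs = {cs. length cs = length xs \<and> lincomb cs xs = 0}"

lemma lincomb_snoc:
  "length cs = length xs \<Longrightarrow> lincomb (cs @ [c]) (xs @ [a]) = lincomb cs xs + fun_scale c a"
  by (simp add: lincomb_def nth_append)

lemma lincomb_Cons: "lincomb (c # cs) (x # xs) = fun_scale c x + lincomb cs xs"
  unfolding lincomb_def length_Cons sum.lessThan_Suc_shift by simp

lemma lincomb_in_span: "length cs = length xs \<Longrightarrow> lincomb cs xs \<in> V.span (set xs)"
  unfolding lincomb_def by (intro V.span_sum V.span_scale V.span_base) auto

lemma in_span_imp_lincomb: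
  "a \<in> V.span (set xs) \<Longrightarrow> \<exists>cs. length cs = length xs \<and> a = lincomb cs xs"
proof (induction xs arbitrary: a)
  case Nil
  then show ?case by (simp add: lincomb_def V.span_empty zero_fun_def)
next
  case (Cons x xs)
  then obtain k where "a - fun_scale k x \<in> V.span (set xs)"
    using V.span_breakdown_eq[of a x "set xs"] by auto
  then obtain cs where "length cs = length xs" "a - fun_scale k x = lincomb cs xs"
    using Cons.IH by blast
  then show ?case by (intro exI[of _ "k # cs"]) (auto simp: lincomb_Cons algebra_simps)
qed

lemma lincomb_map:
  "fun_linear g \<Longrightarrow> length cs = length xs \<Longrightarrow> lincomb cs (map g xs) = g (lincomb cs xs)"
  unfolding lincomb_def by (simp add: VV.linear_sum VV.linear_scale o_def)

lemma lin_rels_map: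
  assumes g: "fun_linear g" "inj_on g W" and W: "V.subspace W" "set xs \<subseteq> W"
  shows "lin_rels (map g xs) = lin_rels xs"
proof -
  have "lincomb cs (map g xs) = 0 \<longleftrightarrow> lincomb cs xs = 0" if "length cs = length xs" for cs
  proof -
    have "lincomb cs xs \<in> W"
      using lincomb_in_span[OF that] V.span_minimal[OF W(2,1)] by blast
    then show ?thesis
      using lincomb_map[OF g(1) that] VV.linear_0[OF g(1)] g(2) V.subspace_0[OF W(1)]
      by (metis inj_on_eq_iff)
  qed
  then show ?thesis by (auto simp: lin_rels_def)
qed

lemma lin_rels_butlast:
  fixes x y :: "(nat \<Rightarrow> 'k::field) list"
  assumes "length x = length y" "lin_rels (x @ [a]) = lin_rels (y @ [b])"
  shows "lin_rels x = lin_rels y"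
proof -
  have extend_by_0: "cs \<in> lin_rels z \<longleftrightarrow> cs @ [0] \<in> lin_rels (z @ [c])" for cs z and c :: "nat \<Rightarrow> 'k"
    by (auto simp: lin_rels_def lincomb_snoc)
  show ?thesis using assms extend_by_0[of _ x a] extend_by_0[of _ y b] by blast
qed

lemma lin_rels_snoc_eq:
  assumes "lin_rels (x @ [a]) = lin_rels (x @ [b])" "a \<in> V.span (set x)"
  shows "b = a"
proof -
  obtain cs where cs: "length cs = length x" "a = lincomb cs x"
    using in_span_imp_lincomb assms(2) by blast
  then have "cs @ [-1] \<in> lin_rels (x @ [a])"
    by (simp add: lin_rels_def lincomb_snoc fun_eq_iff)
  then have "cs @ [-1] \<in> lin_rels (x @ [b])" using assms(1) by simp
  then show "b = a" using cs by (simp add: lin_rels_def lincomb_snoc fun_eq_iff)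
qed

lemma exists_functional_vanishing_on_span:
  assumes a: "a \<notin> V.span X" and b: "b \<notin> V.span X"
  shows "\<exists>f. Vector_Spaces.linear fun_scale (*) f \<and> (\<forall>v\<in>V.span X. f v = 0) \<and> f a = 1 \<and> f b \<noteq> 0"
proof -
  obtain S where S: "S \<subseteq> X" "V.independent S" "X \<subseteq> V.span S"
    using V.maximal_independent_subset[of X] by blast
  have span_S: "V.span S = V.span X"
    using S by (metis V.span_mono V.span_span subset_antisym)
  have aS: "a \<notin> V.span S" and bS: "b \<notin> V.span S" using a b span_S by auto
  have "a \<notin> S" using aS V.span_base by blast
  have ind_a: "V.independent (insert a S)" using V.independent_insertI[OF aS S(2)] .
  have vanish: "\<forall>v\<in>V.span X. f v = 0" if "Vector_Spaces.linear fun_scale (*) f" "\<forall>s\<in>S. f s = 0" for f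
    using VK.linear_eq_0_on_span[OF that(1)] that(2) span_S by metis
  show ?thesis
  proof (cases "b \<in> V.span (insert a S)")
    case True
    then obtain k where k: "b - fun_scale k a \<in> V.span S" using V.span_breakdown_eq by blast
    obtain f where f: "Vector_Spaces.linear fun_scale (*) f" "\<forall>v\<in>insert a S. f v = (if v = a then 1 else 0)"
      using VK.linear_independent_extend[OF ind_a, of "\<lambda>v. if v = a then 1 else 0"] by blast
    have f0: "\<forall>s\<in>S. f s = 0" using f(2) \<open>a \<notin> S\<close> by auto
    have "f (b - fun_scale k a) = 0" using vanish[OF f(1) f0] k span_S by simp
    then have "f b = k" using f VK.linear_diff[OF f(1)] VK.linear_scale[OF f(1)] by simp
    moreover have "k \<noteq> 0" using k bS by auto
    ultimately show ?thesis using f vanish[OF f(1) f0] by auto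
  next
    case False
    have ind_ab: "V.independent (insert b (insert a S))" using V.independent_insertI[OF False ind_a] .
    obtain f where f: "Vector_Spaces.linear fun_scale (*) f"
        "\<forall>v\<in>insert b (insert a S). f v = (if v = a \<or> v = b then 1 else 0)"
      using VK.linear_independent_extend[OF ind_ab, of "\<lambda>v. if v = a \<or> v = b then 1 else 0"] by blast
    have f0: "\<forall>s\<in>S. f s = 0" using f(2) \<open>a \<notin> S\<close> bS V.span_base by fastforce
    show ?thesis using f vanish[OF f(1) f0] by auto
  qed
qed

lemma exists_linear_extension:
  assumes W: "V.subspace W" and x: "set x \<subseteq> W" "a \<in> W" "b \<in> W"
    and rels: "lin_rels (x @ [a]) = lin_rels (x @ [b])"
  shows "\<exists>h. fun_linear h \<and> bij_betw h W W \<and> (\<forall>v\<in>set x. h v = v) \<and> h a = b"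
proof (cases "a \<in> V.span (set x) \<or> b \<in> V.span (set x)")
  case True
  then have "b = a" using lin_rels_snoc_eq rels by metis
  then show ?thesis by (intro exI[of _ id]) (simp add: V.linear_id)
next
  case False
  then obtain f where f: "Vector_Spaces.linear fun_scale (*) f" "\<forall>v\<in>V.span (set x). f v = 0"
      "f a = 1" "f b \<noteq> 0"
    using exists_functional_vanishing_on_span by blast
  have f_add: "f (u + v) = f u + f v" and f_diff: "f (u - v) = f u - f v"
    and f_scale: "f (fun_scale t u) = t * f u" for u v t
    using VK.linear_add[OF f(1)] VK.linear_diff[OF f(1)] VK.linear_scale[OF f(1)] by auto
  define c where "c = b - a"
  have fc: "f c = f b - 1" using f(3) by (simp add: c_def f_diff)
  define h where "h z = z + fun_scale (f z) c" for z
  define h' where "h' z = z - fun_scale (f z / f b) c" for z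
  have "fun_linear h"
    unfolding linear_iff h_def
    by (auto simp: vector_space_fun_scale f_add f_scale V.scale_left_distrib V.scale_right_distrib)
  moreover have "bij_betw h W W"
  proof (rule bij_betw_byWitness[where f' = h'])
    have f_h: "f (h z) = f z * f b" for z by (simp add: h_def f_add f_scale fc algebra_simps)
    have f_h': "f (h' z) = f z / f b" for z using f(4) by (simp add: h'_def f_diff f_scale fc field_simps)
    show "\<forall>z\<in>W. h' (h z) = z" using f(4) by (simp add: h'_def f_h) (simp add: h_def)
    show "\<forall>z\<in>W. h (h' z) = z" by (simp add: h_def f_h') (simp add: h'_def)
    have "c \<in> W" using x W by (simp add: c_def V.subspace_diff)
    then show "h ` W \<subseteq> W" "h' ` W \<subseteq> W"
      using W by (auto simp: h_def h'_def V.subspace_add V.subspace_diff V.subspace_scale)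
  qed
  moreover have "\<forall>v\<in>set x. h v = v"
  proof
    fix v assume "v \<in> set x"
    then have "f v = 0" using f(2) V.span_base by blast
    then show "h v = v" by (simp add: h_def)
  qed
  moreover have "h a = b" by (simp add: h_def f(3) c_def)
  ultimately show ?thesis by blast
qed

lemma rel_vector_atoms: "rel vector_atoms ls xs \<longleftrightarrow> lincomb ls xs = 0"
  by (simp add: vector_atoms_def lincomb_def fun_eq_iff sum_fun_apply fun_scale_apply)

lemma automorphism_restr_vector_atoms:
  assumes g: "fun_linear g" "bij_betw g W W" and W: "V.subspace W"
  shows "automorphism (restr (vector_atoms :: (nat \<Rightarrow> 'k::{field,finite}, 'k list) struct) W) g"
proof -
  have rels: "lincomb ls (map g xs) = 0 \<longleftrightarrow> lincomb ls xs = 0"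
    if "length xs = length ls" "set xs \<subseteq> W" for ls xs
    using lin_rels_map[OF g(1) bij_betw_imp_inj_on[OF g(2)] W that(2)] that(1)
    by (auto simp: lin_rels_def set_eq_iff)
  have ar: "ar vector_atoms = length" by (simp add: vector_atoms_def)
  show ?thesis
    using g(2) unfolding automorphism_def isomorphism_def embedding_def bij_betw_def
    by (simp add: rel_vector_atoms ar rels)
qed

lemma card_orbits_restr_vector_atoms_le:
  assumes W: "V.subspace W"
  shows "finite (orbits (restr (vector_atoms :: (nat \<Rightarrow> 'k::{field,finite}, 'k list) struct) W) d) \<and>
    card (orbits (restr (vector_atoms :: (nat \<Rightarrow> 'k, 'k list) struct) W) d)
      \<le> card (Pow {cs :: 'k list. length cs = d})"
proof (rule card_orbits_le_by_extension[where G = "{g. fun_linear g \<and> bij_betw g W W}" and \<tau> = lin_rels])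
  show "automorphism (restr vector_atoms W) g" if "g \<in> {g. fun_linear g \<and> bij_betw g W W}" for g
    using that W by (simp add: automorphism_restr_vector_atoms)
  show "id \<in> {g. fun_linear g \<and> bij_betw g W W}" by (simp add: V.linear_id)
  show "h \<circ> g \<in> {g. fun_linear g \<and> bij_betw g W W}"
    if "g \<in> {g. fun_linear g \<and> bij_betw g W W}" "h \<in> {g. fun_linear g \<and> bij_betw g W W}" for g h
    using that by (auto intro: Vector_Spaces.linear_compose bij_betw_trans)
  show "lin_rels (map g x) = lin_rels x"
    if "g \<in> {g. fun_linear g \<and> bij_betw g W W}" "set x \<subseteq> univ (restr vector_atoms W)" for g x
    using lin_rels_map[OF _ bij_betw_imp_inj_on W, of g W x] that by simp
  show "lin_rels x = lin_rels y"
    if "length x = length y" "lin_rels (x @ [a]) = lin_rels (y @ [b])" for x y :: "(nat \<Rightarrow> 'k) list" and a b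
    using that by (rule lin_rels_butlast)
  show "\<exists>h\<in>{g. fun_linear g \<and> bij_betw g W W}. (\<forall>v\<in>set x. h v = v) \<and> h a = b"
    if "set x \<subseteq> univ (restr vector_atoms W)" "a \<in> univ (restr vector_atoms W)"
      "b \<in> univ (restr vector_atoms W)" "lin_rels (x @ [a]) = lin_rels (x @ [b])" for x a b
    using exists_linear_extension[OF W] that by fastforce
  show "lin_rels ` tuples (restr vector_atoms W) d \<subseteq> Pow {cs :: 'k list. length cs = d}"
    by (auto simp: tuples_def lin_rels_def)
  show "finite (Pow {cs :: 'k list. length cs = d})"
    using finite_lists_length_eq[OF finite_UNIV, of d] by simp
qed

definition coord_space :: "nat \<Rightarrow> (nat \<Rightarrow> 'k::zero) set" where
  "coord_space n = {v. \<forall>i\<ge>n. v i = 0}"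

lemma subspace_coord_space: "V.subspace (coord_space n)"
  by (simp add: V.subspace_def coord_space_def fun_scale_apply)

lemma finite_coord_space: "finite (coord_space n :: (nat \<Rightarrow> 'k::{zero,finite}) set)"
proof -
  have "coord_space n \<subseteq> (\<lambda>xs i. if i < n then xs ! i else 0) ` {xs :: 'k list. length xs = n}"
  proof
    fix v :: "nat \<Rightarrow> 'k" assume "v \<in> coord_space n"
    then have "v = (\<lambda>i. if i < n then map v [0..<n] ! i else 0)"
      by (auto simp: coord_space_def fun_eq_iff)
    then show "v \<in> (\<lambda>xs i. if i < n then xs ! i else 0) ` {xs. length xs = n}"
      by (intro image_eqI[of _ _ "map v [0..<n]"]) auto
  qed
  moreover have "finite {xs :: 'k list. length xs = n}"
    using finite_lists_length_eq[OF finite_UNIV, of n] by simp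
  ultimately show ?thesis by (rule finite_subset[OF _ finite_imageI])
qed

lemma finite_support_subset_coord_space:
  assumes "finite S" "\<forall>v\<in>S. finite {i. v i \<noteq> 0}"
  shows "\<exists>n. S \<subseteq> coord_space n"
proof -
  have "finite (\<Union>v\<in>S. {i. v i \<noteq> 0})" using assms by blast
  then obtain n where "\<forall>i\<in>(\<Union>v\<in>S. {i. v i \<noteq> 0}). i < n"
    using finite_nat_set_iff_bounded by blast
  then have "S \<subseteq> coord_space n" using leD by (fastforce simp: coord_space_def)
  then show ?thesis by blast
qed

lemma oligomorphic_approximation_vector_atoms:
  "oligomorphic_approximation (vector_atoms :: (nat \<Rightarrow> 'k::{field,finite}, 'k list) struct)"
  unfolding oligomorphic_approximation_def
proof (intro allI impI)
  fix d :: nat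
  have "{i. v i \<noteq> 0} \<subseteq> {..<n}" if "v \<in> coord_space n" for v :: "nat \<Rightarrow> 'k" and n
    using that by (simp add: coord_space_def subset_iff) (meson not_le)
  then have "coord_space n \<subseteq> univ (vector_atoms :: (nat \<Rightarrow> 'k, 'k list) struct)" for n
    by (auto simp: vector_atoms_def intro: finite_subset)
  moreover have "\<exists>B\<in>range coord_space. S \<subseteq> B"
    if "finite S" "S \<subseteq> univ (vector_atoms :: (nat \<Rightarrow> 'k, 'k list) struct)" for S
    using finite_support_subset_coord_space[OF that(1)] that(2) by (auto simp: vector_atoms_def)
  ultimately have "covering_family (vector_atoms :: (nat \<Rightarrow> 'k, 'k list) struct) (range coord_space)"
    by (simp add: covering_family_def finite_coord_space)
  then show "\<exists>\<B>. covering_family (vector_atoms :: (nat \<Rightarrow> 'k, 'k list) struct) \<B> \<and>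
      (\<exists>N. \<forall>B\<in>\<B>. finite (orbits (restr vector_atoms B) d) \<and> card (orbits (restr vector_atoms B) d) \<le> N)"
    using card_orbits_restr_vector_atoms_le[OF subspace_coord_space] by blast
qed

lemma graph_struct_simps [simp]:
  "univ (graph_struct V E) = V" "syms (graph_struct V E) = {()}" "ar (graph_struct V E) = (\<lambda>_. 2)"
  by (simp_all add: graph_struct_def)

lemma restr_graph_struct [simp]: "restr (graph_struct V E) S = graph_struct S E"
  by (simp add: restr_def graph_struct_def)

lemma is_graph_subset: "is_graph V E \<Longrightarrow> S \<subseteq> V \<Longrightarrow> is_graph S E"
  by (auto simp: is_graph_def)

lemma all_length_2_iff:
  "(\<forall>xs. length xs = 2 \<and> set xs \<subseteq> X \<longrightarrow> \<phi> (xs ! 0) (xs ! 1)) \<longleftrightarrow> (\<forall>u\<in>X. \<forall>v\<in>X. \<phi> u v)"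
proof
  assume H: "\<forall>xs. length xs = 2 \<and> set xs \<subseteq> X \<longrightarrow> \<phi> (xs ! 0) (xs ! 1)"
  show "\<forall>u\<in>X. \<forall>v\<in>X. \<phi> u v"
  proof (intro ballI)
    fix u v assume "u \<in> X" "v \<in> X"
    then show "\<phi> u v" using H[rule_format, of "[u, v]"] by simp
  qed
qed (auto simp: numeral_2_eq_2 length_Suc_conv)

lemma embedding_graph_struct_iff:
  "embedding (graph_struct X P) (graph_struct Y Q) f \<longleftrightarrow>
     inj_on f X \<and> f ` X \<subseteq> Y \<and> (\<forall>u\<in>X. \<forall>v\<in>X. P u v \<longleftrightarrow> Q (f u) (f v))"
  using all_length_2_iff[of X "\<lambda>u v. P u v \<longleftrightarrow> Q (f u) (f v)"]
  by (simp add: embedding_def graph_struct_def)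

lemma automorphism_graph_struct_iff:
  "automorphism (graph_struct X P) f \<longleftrightarrow>
     inj_on f X \<and> f ` X = X \<and> (\<forall>u\<in>X. \<forall>v\<in>X. P u v \<longleftrightarrow> P (f u) (f v))"
  unfolding automorphism_def isomorphism_def embedding_graph_struct_iff by auto

lemma finite_graph_isomorphic_nat_graph:
  assumes "finite U" "is_graph U F"
  shows "\<exists>e R. isomorphism (graph_struct U F) (graph_struct {..<card U} R) e \<and> is_graph {..<card U} R"
proof -
  obtain e where e: "bij_betw e U {..<card U}"
    using ex_bij_betw_finite_nat[OF assms(1)] by (auto simp: atLeast0LessThan)
  define R where "R i j = F (inv_into U e i) (inv_into U e j)" for i j
  have inv: "inv_into U e (e u) = u" if "u \<in> U" for u
    using e that by (simp add: bij_betw_def inv_into_f_f)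
  have "isomorphism (graph_struct U F) (graph_struct {..<card U} R) e"
    using e inv by (auto simp: isomorphism_def embedding_graph_struct_iff bij_betw_def R_def)
  moreover have "inv_into U e i \<in> U" if "i < card U" for i
    using e that by (auto simp: bij_betw_def intro: inv_into_into)
  then have "is_graph {..<card U} R" using assms(2) by (simp add: is_graph_def R_def)
  ultimately show ?thesis by blast
qed

section \<open>Symplectic graphs over the two-element field\<close>

(* By default the field operations of bit are rewritten into xor and and. *)
declare add_bit_eq_xor [simp del] mult_bit_eq_and [simp del]

lemma UNIV_bit: "(UNIV :: bit set) = {0, 1}"
  using bit_not_zero_iff by auto

instance bit :: finite
  by standard (simp add: UNIV_bit)

lemma bit_add_self [simp]: "x + x = (0 :: bit)"
  by (cases x) simp_all

lemma fun_bit_add_self [simp]: "u + u = (0 :: nat \<Rightarrow> bit)"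
  by (simp add: fun_eq_iff)

definition symp_form :: "nat \<Rightarrow> (nat \<Rightarrow> bit) \<Rightarrow> (nat \<Rightarrow> bit) \<Rightarrow> bit" where
  "symp_form m u v = (\<Sum>i<m. u (2 * i) * v (2 * i + 1) + u (2 * i + 1) * v (2 * i))"

lemma symp_form_commute: "symp_form m u v = symp_form m v u"
  unfolding symp_form_def by (intro sum.cong refl) (simp add: add.commute mult.commute)

lemma symp_form_add_left: "symp_form m (u + v) w = symp_form m u w + symp_form m v w"
  unfolding symp_form_def sum.distrib[symmetric] by (intro sum.cong refl) (simp add: algebra_simps)

lemma symp_form_add_right: "symp_form m w (u + v) = symp_form m w u + symp_form m w v"
  using symp_form_add_left symp_form_commute by metis

lemma symp_form_scale_left: "symp_form m (fun_scale c u) w = c * symp_form m u w"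
  unfolding symp_form_def sum_distrib_left
  by (intro sum.cong refl) (simp only: fun_scale_apply distrib_left mult.assoc)

lemma symp_form_scale_right: "symp_form m w (fun_scale c u) = c * symp_form m w u"
  using symp_form_scale_left symp_form_commute by metis

lemma symp_form_self [simp]: "symp_form m u u = 0"
  unfolding symp_form_def by (intro sum.neutral ballI) (simp add: mult.commute)

definition transvection :: "nat \<Rightarrow> (nat \<Rightarrow> bit) \<Rightarrow> (nat \<Rightarrow> bit) \<Rightarrow> nat \<Rightarrow> bit" where
  "transvection m c z = z + fun_scale (symp_form m z c) c"

lemma transvection_apply: "transvection m c z = (if symp_form m z c = 0 then z else z + c)"
  by (cases "symp_form m z c") (simp_all add: transvection_def V.scale_one)

lemma transvection_linear: "fun_linear (transvection m c)"
  unfolding linear_iff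
proof (intro conjI allI)
  show "vector_space (fun_scale :: bit \<Rightarrow> _)" by (rule vector_space_fun_scale)
  then show "vector_space (fun_scale :: bit \<Rightarrow> _)" .
  show "transvection m c (u + v) = transvection m c u + transvection m c v" for u v
    unfolding transvection_def symp_form_add_left V.scale_left_distrib by (simp add: add_ac)
  show "transvection m c (fun_scale t u) = fun_scale t (transvection m c u)" for t u
    unfolding transvection_def symp_form_scale_left V.scale_right_distrib V.scale_scale ..
qed

lemma symp_form_transvection: "symp_form m (transvection m c u) (transvection m c v) = symp_form m u v"
proof -
  define s t where "s = symp_form m u c" and "t = symp_form m v c"
  have "symp_form m (transvection m c u) (transvection m c v) =
      symp_form m u v + symp_form m (fun_scale s c) v + symp_form m u (fun_scale t c) +
      symp_form m (fun_scale s c) (fun_scale t c)"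
    unfolding transvection_def s_def t_def symp_form_add_left symp_form_add_right by (simp add: add_ac)
  also have "\<dots> = symp_form m u v + s * t + t * s"
    using symp_form_commute[of m c v] symp_form_commute[of m c u]
    by (simp add: symp_form_scale_left symp_form_scale_right s_def t_def)
  also have "\<dots> = symp_form m u v" by (simp add: mult.commute add.assoc)
  finally show ?thesis .
qed

lemma transvection_transvection: "transvection m c (transvection m c z) = z"
proof -
  have "symp_form m (transvection m c z) c = symp_form m z c"
    unfolding transvection_def symp_form_add_left symp_form_scale_left by simp
  then show ?thesis unfolding transvection_def[of m c "transvection m c z"]
    by (simp add: transvection_def add.assoc flip: V.scale_left_distrib)
qed

definition symplectic_maps :: "nat \<Rightarrow> ((nat \<Rightarrow> bit) \<Rightarrow> nat \<Rightarrow> bit) set" where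
  "symplectic_maps m = {g. fun_linear g \<and> bij_betw g (coord_space (2 * m)) (coord_space (2 * m)) \<and>
                           (\<forall>u v. symp_form m (g u) (g v) = symp_form m u v)}"

lemma id_in_symplectic_maps: "id \<in> symplectic_maps m"
  by (simp add: symplectic_maps_def V.linear_id)

lemma comp_in_symplectic_maps:
  "g \<in> symplectic_maps m \<Longrightarrow> h \<in> symplectic_maps m \<Longrightarrow> h \<circ> g \<in> symplectic_maps m"
  by (auto simp: symplectic_maps_def intro: Vector_Spaces.linear_compose bij_betw_trans)

lemma transvection_in_symplectic_maps:
  assumes "c \<in> coord_space (2 * m)"
  shows "transvection m c \<in> symplectic_maps m"
proof -
  have "transvection m c ` coord_space (2 * m) \<subseteq> coord_space (2 * m)"
    using assms by (auto simp: transvection_def intro!: V.subspace_add[OF subspace_coord_space]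
        V.subspace_scale[OF subspace_coord_space])
  then have "bij_betw (transvection m c) (coord_space (2 * m)) (coord_space (2 * m))"
    by (intro bij_betw_byWitness[where f' = "transvection m c"]) (simp_all add: transvection_transvection)
  then show ?thesis
    by (simp add: symplectic_maps_def transvection_linear symp_form_transvection)
qed

lemma transvection_sum_fixes:
  "symp_form m v a = symp_form m v b \<Longrightarrow> transvection m (a + b) v = v"
  by (simp add: transvection_apply symp_form_add_right)

lemma transvection_sum_moves:
  "symp_form m a b = 1 \<Longrightarrow> transvection m (a + b) a = b"
  by (simp add: transvection_apply symp_form_add_right add.assoc[symmetric])

definition symp_graph :: "nat \<Rightarrow> (nat \<Rightarrow> bit, unit) struct" where
  "symp_graph m = graph_struct (coord_space (2 * m)) (\<lambda>u v. symp_form m u v = 1)"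

lemma is_graph_symp_graph: "is_graph (coord_space (2 * m)) (\<lambda>u v. symp_form m u v = 1)"
  by (simp add: is_graph_def symp_form_commute)

lemma automorphism_symp_graph: "g \<in> symplectic_maps m \<Longrightarrow> automorphism (symp_graph m) g"
  by (simp add: symp_graph_def automorphism_graph_struct_iff symplectic_maps_def bij_betw_def)

definition unit_vec :: "nat \<Rightarrow> nat \<Rightarrow> bit" where
  "unit_vec t = (\<lambda>i. if i = t then 1 else 0)"

lemma coord_space_expand:
  assumes "z \<in> coord_space n"
  shows "z = (\<Sum>j<n. fun_scale (z j) (unit_vec j))"
proof
  fix i
  have "(\<Sum>j<n. fun_scale (z j) (unit_vec j)) i = (\<Sum>j<n. if i = j then z j else 0)"
    unfolding sum_fun_apply by (intro sum.cong) (auto simp: fun_scale_apply unit_vec_def)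
  also have "\<dots> = z i" using assms by (auto simp: coord_space_def)
  finally show "z i = (\<Sum>j<n. fun_scale (z j) (unit_vec j)) i" by simp
qed

lemma sum_lessThan_double:
  fixes g :: "nat \<Rightarrow> 'a::comm_monoid_add"
  shows "(\<Sum>j<2 * m. g j) = (\<Sum>i<m. g (2 * i) + g (2 * i + 1))"
  by (induction m) (simp_all add: algebra_simps)

definition symp_dual :: "nat \<Rightarrow> ((nat \<Rightarrow> bit) \<Rightarrow> bit) \<Rightarrow> nat \<Rightarrow> bit" where
  "symp_dual m f = (\<lambda>j. if j < 2 * m then f (unit_vec (if even j then j + 1 else j - 1)) else 0)"

lemma symp_dual_in_coord_space: "symp_dual m f \<in> coord_space (2 * m)"
  by (simp add: symp_dual_def coord_space_def)

lemma symp_form_symp_dual: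
  assumes f: "Vector_Spaces.linear fun_scale (*) f" and z: "z \<in> coord_space (2 * m)"
  shows "symp_form m z (symp_dual m f) = f z"
proof -
  have "f z = (\<Sum>j<2 * m. z j * f (unit_vec j))"
    by (subst coord_space_expand[OF z]) (simp add: VK.linear_sum[OF f] VK.linear_scale[OF f])
  also have "\<dots> = (\<Sum>i<m. z (2 * i) * f (unit_vec (2 * i)) + z (2 * i + 1) * f (unit_vec (2 * i + 1)))"
    by (rule sum_lessThan_double)
  also have "\<dots> = symp_form m z (symp_dual m f)"
    unfolding symp_form_def by (intro sum.cong refl) (auto simp: symp_dual_def add.commute)
  finally show ?thesis by simp
qed

lemma transvection_sum_extends:
  assumes "a \<in> coord_space (2 * m)" "b \<in> coord_space (2 * m)" "symp_form m a b = 1"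
    and form: "\<forall>v\<in>set x. symp_form m v a = symp_form m v b"
  shows "\<exists>h\<in>symplectic_maps m. (\<forall>v\<in>set x. h v = v) \<and> h a = b"
proof -
  have "transvection m (a + b) \<in> symplectic_maps m"
    using assms(1,2) by (intro transvection_in_symplectic_maps V.subspace_add[OF subspace_coord_space])
  moreover have "\<forall>v\<in>set x. transvection m (a + b) v = v"
    using form by (auto intro: transvection_sum_fixes)
  moreover have "transvection m (a + b) a = b" using assms(3) by (rule transvection_sum_moves)
  ultimately show ?thesis by blast
qed

lemma transvections_extend_via:
  assumes a: "a \<in> coord_space (2 * m)" and b: "b \<in> coord_space (2 * m)"
    and w: "w \<in> coord_space (2 * m)"
    and form: "\<forall>v\<in>set x. symp_form m v a = symp_form m v b" and x_w: "\<forall>v\<in>set x. symp_form m v w = 0"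
    and ab: "symp_form m a b = 0" and a_w: "symp_form m a w = 1" and b_w: "symp_form m b w = 1"
  shows "\<exists>h\<in>symplectic_maps m. (\<forall>v\<in>set x. h v = v) \<and> h a = b"
proof -
  have "a + w \<in> coord_space (2 * m)" by (rule V.subspace_add[OF subspace_coord_space a w])
  moreover have "symp_form m (a + w) b = 1"
    using ab b_w by (simp add: symp_form_add_left symp_form_commute[of m w b])
  moreover have "\<forall>v\<in>set x. symp_form m v (a + w) = symp_form m v b"
    using form x_w by (simp add: symp_form_add_right)
  ultimately obtain h where h: "h \<in> symplectic_maps m" "\<forall>v\<in>set x. h v = v" "h (a + w) = b"
    using transvection_sum_extends b by blast
  have "transvection m w a = a + w" using a_w by (simp add: transvection_apply)
  moreover have "\<forall>v\<in>set x. transvection m w v = v" using x_w by (simp add: transvection_apply)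
  moreover have "h \<circ> transvection m w \<in> symplectic_maps m"
    by (rule comp_in_symplectic_maps[OF transvection_in_symplectic_maps[OF w] h(1)])
  ultimately show ?thesis using h(2,3) by (intro bexI[of _ "h \<circ> transvection m w"]) simp_all
qed

lemma symplectic_extension_step:
  assumes x: "set x \<subseteq> coord_space (2 * m)" "a \<in> coord_space (2 * m)" "b \<in> coord_space (2 * m)"
    and rels: "lin_rels (x @ [a]) = lin_rels (x @ [b])"
    and form: "\<forall>v\<in>set x. symp_form m v a = symp_form m v b"
  shows "\<exists>h\<in>symplectic_maps m. (\<forall>v\<in>set x. h v = v) \<and> h a = b"
proof (cases "a \<in> V.span (set x) \<or> b \<in> V.span (set x)")
  case True
  then have "b = a" using lin_rels_snoc_eq rels by metis
  then show ?thesis using id_in_symplectic_maps[of m] by (intro bexI[of _ id]) auto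
next
  case not_in_span: False
  show ?thesis
  proof (cases "symp_form m a b = 1")
    case True
    then show ?thesis using transvection_sum_extends x(2,3) form by blast
  next
    case False
    obtain f where f: "Vector_Spaces.linear fun_scale (*) f" "\<forall>v\<in>V.span (set x). f v = 0"
        "f a = 1" "f b \<noteq> 0"
      using exists_functional_vanishing_on_span not_in_span by blast
    have form_f: "symp_form m v (symp_dual m f) = f v" if "v \<in> coord_space (2 * m)" for v
      using symp_form_symp_dual[OF f(1) that] .
    have "\<forall>v\<in>set x. symp_form m v (symp_dual m f) = 0"
      using form_f f(2) V.span_base[of _ "set x"] x(1) by (simp add: subset_iff)
    moreover have "symp_form m a b = 0" using False by simp
    ultimately show ?thesis
      using transvections_extend_via[OF x(2,3) symp_dual_in_coord_space form] form_f x(2,3) f(3,4)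
      by simp
  qed
qed

definition gram :: "nat \<Rightarrow> (nat \<Rightarrow> bit) list \<Rightarrow> bit list list" where
  "gram m x = map (\<lambda>u. map (symp_form m u) x) x"

lemma gram_butlast: "gram m x = map (take (length x)) (butlast (gram m (x @ [a])))"
  by (simp add: gram_def)

lemma last_gram: "last (gram m (x @ [a])) = map (symp_form m a) x @ [0]"
  by (simp add: gram_def)

lemma card_orbits_symp_graph_bounded:
  "\<exists>N. \<forall>m. finite (orbits (symp_graph m) d) \<and> card (orbits (symp_graph m) d) \<le> N"
proof -
  define T where "T = Pow {cs :: bit list. length cs = d} \<times>
    {M. set M \<subseteq> {r :: bit list. length r = d} \<and> length M = d}"
  have "finite (orbits (symp_graph m) d) \<and> card (orbits (symp_graph m) d) \<le> card T" for m
  proof (rule card_orbits_le_by_extension[where G = "symplectic_maps m" and \<tau> = "\<lambda>x. (lin_rels x, gram m x)"])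
    show "automorphism (symp_graph m) g" if "g \<in> symplectic_maps m" for g
      using that by (rule automorphism_symp_graph)
    show "id \<in> symplectic_maps m" by (rule id_in_symplectic_maps)
    show "h \<circ> g \<in> symplectic_maps m" if "g \<in> symplectic_maps m" "h \<in> symplectic_maps m" for g h
      using that by (rule comp_in_symplectic_maps)
    show "(lin_rels (map g x), gram m (map g x)) = (lin_rels x, gram m x)"
      if "g \<in> symplectic_maps m" "set x \<subseteq> univ (symp_graph m)" for g x
    proof -
      have "fun_linear g" "inj_on g (coord_space (2 * m))" "\<forall>u v. symp_form m (g u) (g v) = symp_form m u v"
        using that(1) by (auto simp: symplectic_maps_def bij_betw_def)
      moreover have "set x \<subseteq> coord_space (2 * m)" using that(2) by (simp add: symp_graph_def)
      ultimately show ?thesis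
        using lin_rels_map[OF _ _ subspace_coord_space] by (simp add: gram_def)
    qed
    show "(lin_rels x, gram m x) = (lin_rels y, gram m y)"
      if "length x = length y" "(lin_rels (x @ [a]), gram m (x @ [a])) = (lin_rels (y @ [b]), gram m (y @ [b]))"
      for x y a b
      using that lin_rels_butlast[of x y a b] gram_butlast[of m x a] gram_butlast[of m y b] by simp
    show "\<exists>h\<in>symplectic_maps m. (\<forall>v\<in>set x. h v = v) \<and> h a = b"
      if "set x \<subseteq> univ (symp_graph m)" "a \<in> univ (symp_graph m)" "b \<in> univ (symp_graph m)"
        "(lin_rels (x @ [a]), gram m (x @ [a])) = (lin_rels (x @ [b]), gram m (x @ [b]))" for x a b
    proof (rule symplectic_extension_step)
      show "set x \<subseteq> coord_space (2 * m)" "a \<in> coord_space (2 * m)" "b \<in> coord_space (2 * m)"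
        using that(1-3) by (simp_all add: symp_graph_def)
      show "lin_rels (x @ [a]) = lin_rels (x @ [b])" using that(4) by simp
      have "map (symp_form m a) x = map (symp_form m b) x"
        using arg_cong[OF that(4), of "last \<circ> snd"] by (simp add: last_gram)
      then show "\<forall>v\<in>set x. symp_form m v a = symp_form m v b"
        by (simp add: symp_form_commute)
    qed
    show "(\<lambda>x. (lin_rels x, gram m x)) ` tuples (symp_graph m) d \<subseteq> T"
      by (auto simp: T_def tuples_def lin_rels_def gram_def)
    show "finite T"
      unfolding T_def
      by (intro finite_cartesian_product finite_Pow_iff[THEN iffD2] finite_lists_length_eq)
        (simp_all add: finite_lists_length_eq[OF finite_UNIV, simplified])
  qed
  then show ?thesis by blast
qed

(* Vertex i goes to e(2i) plus the e(2l+1) for its neighbours l < i; the form of two such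
   vectors only sees the neighbour of the larger index. *)
lemma nat_graph_embeds_symp_graph:
  assumes R: "is_graph {..<k} R"
  shows "\<exists>p. embedding (graph_struct {..<k} R) (symp_graph k) p"
proof -
  define p :: "nat \<Rightarrow> nat \<Rightarrow> bit" where
    "p i t = of_bool (t = 2 * i \<or> (odd t \<and> t div 2 < i \<and> R i (t div 2)))" for i t
  have p_even: "p i (2 * l) = of_bool (l = i)" for i l by (simp add: p_def)
  have p_odd: "p i (2 * l + 1) = of_bool (l < i \<and> R i l)" for i l
    by (simp add: p_def) presburger
  have "symp_form k (p i) (p j) =
      (\<Sum>l<k. (if l = i then of_bool (i < j \<and> R j i) else 0) + (if l = j then of_bool (j < i \<and> R i j) else 0))"
    for i j
    unfolding symp_form_def p_even p_odd by (intro sum.cong refl) auto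
  then have form: "symp_form k (p i) (p j) = of_bool (i < j \<and> R j i) + of_bool (j < i \<and> R i j)"
    if "i < k" "j < k" for i j
    using that by (simp add: sum.distrib)
  have "symp_form k (p i) (p j) = 1 \<longleftrightarrow> R i j" if "i < k" "j < k" for i j
    using form[OF that] R that unfolding is_graph_def by (cases i j rule: linorder_cases) auto
  moreover have "inj_on p {..<k}"
  proof
    fix i j assume "p i = p j"
    then have "p i (2 * i) = p j (2 * i)" by simp
    then show "i = j" by (simp add: p_even split: if_splits)
  qed
  moreover have "p ` {..<k} \<subseteq> coord_space (2 * k)" by (auto simp: p_def coord_space_def)
  ultimately show ?thesis by (auto simp: symp_graph_def embedding_graph_struct_iff)
qed

lemma finite_graph_embeds_symp_graph:
  assumes "finite U" "is_graph U F"
  shows "\<exists>p. embedding (graph_struct U F) (symp_graph (card U)) p"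
proof -
  obtain e R where e: "isomorphism (graph_struct U F) (graph_struct {..<card U} R) e"
    and R: "is_graph {..<card U} R"
    using finite_graph_isomorphic_nat_graph[OF assms] by blast
  obtain p where p: "embedding (graph_struct {..<card U} R) (symp_graph (card U)) p"
    using nat_graph_embeds_symp_graph[OF R] by blast
  have "embedding (graph_struct U F) (graph_struct {..<card U} R) e"
    using e by (simp add: isomorphism_def)
  from embedding_comp[OF this p]
  have "embedding (graph_struct U F) (symp_graph (card U)) (p \<circ> e)" by (simp add: symp_graph_def)
  then show ?thesis by blast
qed

section \<open>Rado atoms\<close>

lemma rado_graph_embeds_finite_graph:
  assumes rado: "is_rado_graph V E" and U: "finite U" "is_graph U F"
  shows "\<exists>q. embedding (graph_struct U F) (graph_struct V E) q"
proof -
  obtain e R where e: "isomorphism (graph_struct U F) (graph_struct {..<card U} R) e"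
    and R: "is_graph {..<card U} R"
    using finite_graph_isomorphic_nat_graph[OF U] by blast
  obtain f where f: "embedding (graph_struct {..<card U} R) (graph_struct V E) f"
    using rado R unfolding is_rado_graph_def by blast
  have "embedding (graph_struct U F) (graph_struct {..<card U} R) e"
    using e by (simp add: isomorphism_def)
  from embedding_comp[OF this f]
  have "embedding (graph_struct U F) (graph_struct V E) (f \<circ> e)" by simp
  then show ?thesis by blast
qed

lemma rado_graph_covered_by_symp_graphs:
  assumes rado: "is_rado_graph V E" and S: "finite S" "S \<subseteq> V"
  shows "\<exists>m \<psi>. embedding (symp_graph m) (graph_struct V E) \<psi> \<and> S \<subseteq> \<psi> ` coord_space (2 * m)"
proof -
  have hom: "homogeneous (graph_struct V E)" and G: "is_graph V E"
    using rado by (simp_all add: is_rado_graph_def)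
  obtain p where p: "embedding (graph_struct S E) (symp_graph (card S)) p"
    using finite_graph_embeds_symp_graph[OF S(1) is_graph_subset[OF G S(2)]] by blast
  obtain q where q: "embedding (symp_graph (card S)) (graph_struct V E) q"
    using rado_graph_embeds_finite_graph[OF rado finite_coord_space is_graph_symp_graph]
    by (auto simp: symp_graph_def)
  have p': "embedding (restr (graph_struct V E) S) (symp_graph (card S)) p" using p by simp
  have sig: "syms (symp_graph (card S)) = syms (graph_struct V E)"
    "ar (symp_graph (card S)) = ar (graph_struct V E)"
    by (simp_all add: symp_graph_def)
  obtain \<psi> where \<psi>: "embedding (symp_graph (card S)) (graph_struct V E) \<psi>" "\<forall>a\<in>S. \<psi> (p a) = a"
    using homogeneous_extend_embedding[OF hom q p' S(1) _ sig] S(2) by auto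
  have "S \<subseteq> \<psi> ` coord_space (2 * card S)"
    using \<psi>(2) p by (force simp: symp_graph_def embedding_def)
  then show ?thesis using \<psi>(1) by blast
qed

lemma oligomorphic_approximation_rado_graph:
  assumes rado: "is_rado_graph V E"
  shows "oligomorphic_approximation (graph_struct V E)"
  unfolding oligomorphic_approximation_def
proof (intro allI impI)
  fix d :: nat
  obtain N where N: "\<forall>m. finite (orbits (symp_graph m) d) \<and> card (orbits (symp_graph m) d) \<le> N"
    using card_orbits_symp_graph_bounded by blast
  define \<B> where
    "\<B> = {\<psi> ` coord_space (2 * m) | \<psi> m. embedding (symp_graph m) (graph_struct V E) \<psi>}"
  have "finite (orbits (restr (graph_struct V E) B) d) \<and> card (orbits (restr (graph_struct V E) B) d) \<le> N"
    if member: "B \<in> \<B>" for B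
  proof -
    obtain \<psi> m where \<psi>: "embedding (symp_graph m) (graph_struct V E) \<psi>" and B: "B = \<psi> ` coord_space (2 * m)"
      using member unfolding \<B>_def by blast
    have "isomorphism (symp_graph m) (restr (graph_struct V E) B) \<psi>"
      using embedding_restr_isomorphism[OF \<psi>, of "coord_space (2 * m)"] B
      by (simp add: symp_graph_def)
    from card_orbits_isomorphism_le[OF this]
    show ?thesis using N by (simp add: symp_graph_def) (meson le_trans)
  qed
  moreover have "covering_family (graph_struct V E) \<B>"
    unfolding covering_family_def
  proof (intro conjI ballI allI impI)
    fix B assume "B \<in> \<B>"
    then show "finite B" "B \<subseteq> univ (graph_struct V E)"
      using finite_coord_space by (auto simp: \<B>_def embedding_def symp_graph_def)
  next
    fix S assume "finite S \<and> S \<subseteq> univ (graph_struct V E)"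
    then show "\<exists>B\<in>\<B>. S \<subseteq> B"
      using rado_graph_covered_by_symp_graphs[OF rado] unfolding \<B>_def by fastforce
  qed
  ultimately show "\<exists>\<B>. covering_family (graph_struct V E) \<B> \<and>
      (\<exists>N. \<forall>B\<in>\<B>. finite (orbits (restr (graph_struct V E) B) d) \<and>
                   card (orbits (restr (graph_struct V E) B) d) \<le> N)"
    by blast
qed

theorem mainTheorem2:
  shows "(\<forall>A :: ('a, 'r) struct.
            countable (univ A) \<and> homogeneous A \<and> oligomorphic A \<and>
            (\<exists>\<B>. covering_family A \<B> \<and> (\<forall>B\<in>\<B>. homogeneous (restr A B)))
            \<longrightarrow> oligomorphic_approximation A)
       \<and> oligomorphic_approximation equality_atoms
       \<and> oligomorphic_approximation (vector_atoms :: (nat \<Rightarrow> 'k::{field,finite}, 'k list) struct)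
       \<and> (\<forall>(V :: 'b set) E. is_rado_graph V E \<longrightarrow> oligomorphic_approximation (graph_struct V E))"
  using oligomorphic_approximation_if_homogeneous_cover oligomorphic_approximation_equality_atoms
    oligomorphic_approximation_vector_atoms oligomorphic_approximation_rado_graph
  by blast

end
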